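(* Assume $\sigma_1(x)=\sigma_1'(0)x$ with $\sigma_1'(0)\ne0$, so that $\sigma_2(x)=\tfrac12\sigma_2''(0)\,x(x-a_2)$ with $\tfrac12\sigma_2''(0)=q(1-q^{-1})\tau'(0)$ and $\sigma_2'(0)=q[\sigma_1'(0)+(1-q^{-1})\tau(0)]\ne0$. Let $\Lambda_q=\tau'(0)/\sigma_1'(0)$ and $y_0=q^{-1}\Big[1+\frac{(1-q^{-1})\tau(0)}{\sigma_1'(0)}\Big]$, and assume $\Lambda_q<0$, $a_2>0$ and $qy_0<0$. Put $a=a_2$ and $$\rho(x)=|x|^{\alpha}\sqrt{x^{\log_qx-1}}\,(qa/x;q)_\infty,\qquad q^{\alpha}=\frac{q^{-2}\tfrac12\sigma_2''(0)}{\sigma_1'(0)}.$$ Then there exist polynomials $P_n$, $n\in\mathbb{N}_0$, with $P_n$ of degree $n$ a solution of the q-EHT with $\lambda=\lambda_n$, and nonzero constants $d_n^2$, such that for all $m,n\in\mathbb{N}_0$ $$\int_a^{\infty}P_n(x)P_m(x)\rho(x)\,d_{q^{-1}}x=d_n^2\delta_{mn},$$ i.e. orthogonality with respect to $\rho$ supported on $\{q^{-k}a\}_{k\in\mathbb{N}_0}$.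
   Context: Throughout $0<q<1$. For a function $y$ and $\zeta\in\{q,q^{-1}\}$, $D_\zeta y(x)=\frac{y(x)-y(\zeta x)}{(1-\zeta)x}$ for $x\ne0$ and $D_\zeta y(0)=y'(0)$; $[n]_q=\frac{1-q^n}{1-q}$. Let $\sigma_1$ be a real polynomial of degree at most two, $\tau(x)=\tau'(0)x+\tau(0)$ a real polynomial with $\tau'(0)\ne0$, and $\sigma_2(x):=q[\sigma_1(x)+(1-q^{-1})x\tau(x)]$. The q-EHT with parameter $n$ is $\sigma_1(x)D_{q^{-1}}D_qy(x)+\tau(x)D_qy(x)+\lambda_ny(x)=0$, $\lambda_n=-[n]_q\big(\tau'(0)+\tfrac12[n-1]_{q^{-1}}\sigma_1''(0)\big)$. $(\beta;q)_\infty=\prod_{k\ge0}(1-\beta q^k)$. For $q^\alpha=c$ ($c\ne0$), $\alpha$ is any complex number with $e^{\alpha\ln q}=c$ and $|x|^\alpha:=e^{\alpha\ln|x|}$; for $x>0$, $\sqrt{x^{\log_qx-1}}:=\exp\big(\tfrac12(\log_qx-1)\ln x\big)$. For $a>0$, $\int_a^\infty f(x)\,d_{q^{-1}}x=(q^{-1}-1)a\sum_{j\ge0}q^{-j}f(q^{-j}a)$. *)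

theory Defs
  imports "HOL-Analysis.Analysis" "HOL-Computational_Algebra.Polynomial"
begin

definition qD :: "real \<Rightarrow> (real \<Rightarrow> real) \<Rightarrow> real \<Rightarrow> real" where
  "qD \<zeta> y x = (if x = 0 then deriv y 0 else (y x - y (\<zeta> * x)) / ((1 - \<zeta>) * x))"

definition qnum :: "real \<Rightarrow> int \<Rightarrow> real" where
  "qnum q n = (1 - q powi n) / (1 - q)"

definition qpoch_inf :: "real \<Rightarrow> real \<Rightarrow> real" where
  "qpoch_inf \<beta> q = (\<Prod>k. 1 - \<beta> * q ^ k)"

definition qEHT_lambda :: "real \<Rightarrow> real poly \<Rightarrow> real poly \<Rightarrow> nat \<Rightarrow> real" where
  "qEHT_lambda q \<sigma>1 \<tau> n =
     - qnum q (int n) * (coeff \<tau> 1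
        + (1/2) * qnum (1/q) (int n - 1) * poly (pderiv (pderiv \<sigma>1)) 0)"

definition solves_qEHT :: "real \<Rightarrow> real poly \<Rightarrow> real poly \<Rightarrow> nat \<Rightarrow> (real \<Rightarrow> real) \<Rightarrow> bool" where
  "solves_qEHT q \<sigma>1 \<tau> n y \<longleftrightarrow>
     (\<forall>x. poly \<sigma>1 x * qD (1/q) (qD q y) x + poly \<tau> x * qD q y x
            + qEHT_lambda q \<sigma>1 \<tau> n * y x = 0)"

end

(*
  On monomials the q-EHT operator acts as x^k \<mapsto> t1 [k]_q x^k + c_k x^(k-1): it is upper
  bidiagonal with pairwise distinct diagonal entries, so it has a monic eigenpolynomial of every
  degree n, with eigenvalue -\<lambda>_n.

  On the lattice x_j = q^(-j) a the equation becomes a three-term recurrence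
  A_j (y_(j+1) - y_j) + C_j (y_(j-1) - y_j) = -\<lambda> y_j whose backward coefficient C_j vanishes at
  x_0 = a, the nonzero root of \<sigma>2. The weight satisfies the Pearson equation
  w_(j+1) C_(j+1) = w_j A_j, so for two eigenfunctions the discrete Green identity telescopes to the
  limit of the flux w_j A_j (f_(j+1) g_j - f_j g_(j+1)). Since w_(j+1) / w_j \<rightarrow> 0, the weight decays
  faster than any polynomial grows along the lattice: the flux tends to 0 and all series converge.
  Distinct eigenvalues give orthogonality, positivity of the weight gives positive norms.
*)

theory Submission
  imports Defs
begin

section \<open>q-derivatives of polynomials\<close>

lemma qnum_of_nat: "qnum q (int k) = (1 - q ^ k) / (1 - q)"
  by (simp add: qnum_def)

lemma qnum_0 [simp]: "qnum q 0 = 0"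
  by (simp add: qnum_def)

lemma qnum_Suc: "qnum q (1 + int k) = (1 - q ^ Suc k) / (1 - q)"
  using qnum_of_nat[of q "Suc k"] by simp

lemma poly_eq_sum_lessThan:
  fixes p :: "'a::comm_semiring_1 poly"
  assumes "degree p < n"
  shows "poly p x = (\<Sum>k<n. coeff p k * x ^ k)"
  unfolding poly_altdef
  by (rule sum.mono_neutral_left) (use assms in \<open>auto simp: coeff_eq_0\<close>)

definition qderiv :: "real \<Rightarrow> real poly \<Rightarrow> real poly" where
  "qderiv q p = Poly (map (\<lambda>k. qnum q (int (Suc k)) * coeff p (Suc k)) [0..<degree p])"

lemma coeff_qderiv: "coeff (qderiv q p) k = qnum q (int (Suc k)) * coeff p (Suc k)"
  by (cases "k < degree p") (simp_all add: qderiv_def nth_default_def coeff_eq_0)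

lemma degree_qderiv_le: "degree (qderiv q p) \<le> degree p"
  by (rule degree_le) (simp add: coeff_qderiv coeff_eq_0)

lemma poly_qderiv:
  assumes "q \<noteq> 1"
  shows "poly p x - poly p (q * x) = (1 - q) * x * poly (qderiv q p) x"
proof -
  define d where "d = degree p"
  have "poly p x - poly p (q * x) = (\<Sum>k<Suc d. coeff p k * (1 - q ^ k) * x ^ k)"
    by (simp add: d_def poly_altdef lessThan_Suc_atMost sum_subtractf[symmetric]
        algebra_simps)
  also have "\<dots> = (\<Sum>k<d. coeff p (Suc k) * (1 - q ^ Suc k) * x ^ Suc k)"
    by (subst sum.lessThan_Suc_shift) simp
  also have "\<dots> = (1 - q) * x * (\<Sum>k<d. coeff (qderiv q p) k * x ^ k)"
    unfolding sum_distrib_left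
    by (rule sum.cong) (use assms in \<open>simp_all add: coeff_qderiv qnum_Suc field_simps\<close>)
  also have "\<dots> = (1 - q) * x * (\<Sum>k<Suc d. coeff (qderiv q p) k * x ^ k)"
    by (simp add: d_def coeff_qderiv coeff_eq_0)
  also have "(\<Sum>k<Suc d. coeff (qderiv q p) k * x ^ k) = poly (qderiv q p) x"
    by (rule poly_eq_sum_lessThan[symmetric]) (use degree_qderiv_le[of q p] in \<open>simp add: d_def\<close>)
  finally show ?thesis .
qed

lemma qD_poly:
  assumes "q \<noteq> 1"
  shows "qD q (poly p) = poly (qderiv q p)"
proof
  fix x :: real
  show "qD q (poly p) x = poly (qderiv q p) x"
  proof (cases "x = 0")
    case True
    have "deriv (poly p) 0 = coeff p 1"
      by (simp add: DERIV_imp_deriv[OF poly_DERIV] poly_0_coeff_0 coeff_pderiv)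
    with True assms show ?thesis
      by (simp add: qD_def poly_0_coeff_0 coeff_qderiv qnum_def)
  next
    case False
    with assms show ?thesis by (simp add: qD_def poly_qderiv)
  qed
qed

section \<open>Polynomial solutions of the q-EHT\<close>

definition qEHT_op :: "real \<Rightarrow> real poly \<Rightarrow> real poly \<Rightarrow> real poly \<Rightarrow> real poly" where
  "qEHT_op q \<sigma>1 \<tau> p = \<sigma>1 * qderiv (1/q) (qderiv q p) + \<tau> * qderiv q p"

lemma coeff_qEHT_op_linear:
  "coeff (qEHT_op q [:0, s1:] [:t0, t1:] p) k
     = t1 * qnum q (int k) * coeff p k
       + qnum q (int (Suc k)) * (s1 * qnum (1/q) (int k) + t0) * coeff p (Suc k)"
  by (cases k) (simp_all add: qEHT_op_def coeff_qderiv algebra_simps)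

lemma bidiagonal_eigenpoly:
  fixes d s :: "nat \<Rightarrow> real"
  assumes "\<And>k. k < n \<Longrightarrow> d k \<noteq> d n"
  shows "\<exists>p. degree p = n \<and> lead_coeff p = 1 \<and>
    (\<forall>k. (d k - d n) * coeff p k + s k * coeff p (Suc k) = 0)"
proof -
  define b where "b k = (\<Prod>i\<in>{k..<n}. - s i / (d i - d n))" for k
  define p where "p = Poly (map b [0..<Suc n])"
  have coeff_p: "coeff p k = (if k \<le> n then b k else 0)" for k
    by (simp add: p_def nth_default_def del: upt_Suc)
  have "degree p = n"
  proof (rule antisym)
    show "degree p \<le> n" by (rule degree_le) (simp add: coeff_p)
    show "n \<le> degree p" by (rule le_degree) (simp add: coeff_p b_def)
  qed
  moreover have "coeff p n = 1" by (simp add: coeff_p b_def)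
  moreover have "(d k - d n) * coeff p k + s k * coeff p (Suc k) = 0" for k
  proof (cases "k < n")
    case True
    then have "b k = - s k / (d k - d n) * b (Suc k)"
      by (simp add: b_def prod.atLeast_Suc_lessThan)
    with True assms[OF True] show ?thesis by (simp add: coeff_p)
  qed (simp add: coeff_p)
  ultimately show ?thesis by blast
qed

lemma qEHT_lambda_linear: "qEHT_lambda q [:0, s1:] [:t0, t1:] n = - t1 * qnum q (int n)"
  by (simp add: qEHT_lambda_def pderiv_pCons)

lemma solves_qEHT_poly_iff:
  assumes "q \<noteq> 1"
  shows "solves_qEHT q \<sigma>1 \<tau> n (poly p) \<longleftrightarrow>
     qEHT_op q \<sigma>1 \<tau> p + smult (qEHT_lambda q \<sigma>1 \<tau> n) p = 0"
proof -
  have "1 / q \<noteq> 1" using assms by auto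
  then show ?thesis
    using assms by (simp add: solves_qEHT_def qD_poly qEHT_op_def poly_eq_poly_eq_iff[symmetric] fun_eq_iff)
qed

lemma qEHT_polynomial_solution:
  assumes "0 < q" "q \<noteq> 1" "t1 \<noteq> 0"
  shows "\<exists>p. degree p = n \<and> lead_coeff p = 1 \<and> solves_qEHT q [:0, s1:] [:t0, t1:] n (poly p)"
proof -
  define d where "d k = t1 * qnum q (int k)" for k
  define s where "s k = qnum q (int (Suc k)) * (s1 * qnum (1/q) (int k) + t0)" for k
  have "d k \<noteq> d n" if "k < n" for k
    using that assms by (simp add: d_def qnum_of_nat power_inject_exp')
  then obtain p where "degree p = n" "lead_coeff p = 1"
    and p: "\<And>k. (d k - d n) * coeff p k + s k * coeff p (Suc k) = 0"
    using bidiagonal_eigenpoly by blast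
  moreover have "solves_qEHT q [:0, s1:] [:t0, t1:] n (poly p)"
    unfolding solves_qEHT_poly_iff[OF assms(2)] qEHT_lambda_linear
  proof (rule poly_eqI)
    fix k show "coeff (qEHT_op q [:0, s1:] [:t0, t1:] p + smult (- t1 * qnum q (int n)) p) k
        = coeff 0 k"
      using p[of k] by (simp add: coeff_qEHT_op_linear d_def s_def algebra_simps)
  qed
  ultimately show ?thesis by blast
qed

section \<open>Discrete orthogonality\<close>

lemma discrete_orthogonality:
  fixes w A C f g :: "nat \<Rightarrow> real"
  assumes pearson: "\<And>j. w (Suc j) * C (Suc j) = w j * A j"
    and f: "\<And>j. A j * (f (Suc j) - f j) + C j * (f (j - 1) - f j) + \<mu> * f j = 0"
    and g: "\<And>j. A j * (g (Suc j) - g j) + C j * (g (j - 1) - g j) + \<nu> * g j = 0"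
    and flux: "(\<lambda>j. w j * A j * (f (Suc j) * g j - f j * g (Suc j))) \<longlonglongrightarrow> 0"
    and "\<mu> \<noteq> \<nu>"
  shows "(\<lambda>j. w j * (f j * g j)) sums 0"
proof -
  \<comment> \<open>Green's identity \<open>(\<nu> - \<mu>) w_j f_j g_j = F_j - F_(j-1)\<close>; at \<open>j = 0\<close> the backward difference
    \<open>f (j - 1) - f j\<close> is \<open>0\<close> by truncated subtraction, so there is no boundary term.\<close>
  define F where "F j = w j * A j * (f (Suc j) * g j - f j * g (Suc j))" for j
  define G where "G j = (case j of 0 \<Rightarrow> 0 | Suc i \<Rightarrow> F i)" for j
  have green: "(\<nu> - \<mu>) * (w j * (f j * g j))
      = F j + w j * C j * (f (j - 1) * g j - f j * g (j - 1))" for j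
  proof -
    have fA: "A j * (f (Suc j) - f j) = - C j * (f (j - 1) - f j) - \<mu> * f j"
      using f[of j] by linarith
    have gA: "A j * (g (Suc j) - g j) = - C j * (g (j - 1) - g j) - \<nu> * g j"
      using g[of j] by linarith
    have "F j = w j * (A j * (f (Suc j) - f j) * g j - f j * (A j * (g (Suc j) - g j)))"
      by (simp add: F_def algebra_simps)
    then show ?thesis unfolding fA gA by (simp add: algebra_simps)
  qed
  have "(\<nu> - \<mu>) * (w j * (f j * g j)) = G (Suc j) - G j" for j
  proof (cases j)
    case (Suc i)
    have "w j * C j * (f (j - 1) * g j - f j * g (j - 1)) = - F i"
      unfolding Suc diff_Suc_1 pearson by (simp add: F_def algebra_simps)
    then show ?thesis using green[of j] Suc by (simp add: G_def)
  qed (simp add: green G_def)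
  moreover have "G \<longlonglongrightarrow> 0"
    using flux unfolding F_def[symmetric] by (subst filterlim_sequentially_Suc[symmetric]) (simp add: G_def)
  then have "(\<lambda>j. G (Suc j) - G j) sums 0"
    using telescope_sums[of G 0] by (simp add: G_def)
  ultimately have "(\<lambda>j. (\<nu> - \<mu>) * (w j * (f j * g j))) sums 0" by simp
  then have "(\<lambda>j. (\<nu> - \<mu>) * (w j * (f j * g j)) / (\<nu> - \<mu>)) sums (0 / (\<nu> - \<mu>))"
    by (rule sums_divide)
  with assms(5) show ?thesis by simp
qed

section \<open>The weight on the lattice\<close>

lemma convergent_prod_qpoch:
  fixes q \<beta> :: real
  assumes "0 < q" "q < 1"
  shows "convergent_prod (\<lambda>k. 1 - \<beta> * q ^ k)"
proof -
  have "summable (\<lambda>k. norm ((1 - \<beta> * q ^ k) - 1))"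
    using assms by (simp add: abs_mult summable_mult)
  then show ?thesis
    by (intro abs_convergent_prod_imp_convergent_prod summable_imp_abs_convergent_prod)
qed

lemma qpoch_inf_pos:
  fixes q \<beta> :: real
  assumes "0 < q" "q < 1" "0 \<le> \<beta>" "\<beta> < 1"
  shows "0 < qpoch_inf \<beta> q"
  unfolding qpoch_inf_def
proof (rule less_0_prodinf)
  show "convergent_prod (\<lambda>k. 1 - \<beta> * q ^ k)" using assms(1,2) by (rule convergent_prod_qpoch)
  fix k
  have "\<beta> * q ^ k \<le> \<beta>" using assms by (intro mult_left_le power_le_one) auto
  with assms show "0 < 1 - \<beta> * q ^ k" by simp
qed

lemma qpoch_inf_unfold:
  assumes "0 < q" "q < 1" "\<beta> \<noteq> 1"
  shows "qpoch_inf \<beta> q = (1 - \<beta>) * qpoch_inf (\<beta> * q) q"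
proof -
  have "(\<Prod>k. 1 - \<beta> * q ^ Suc k) = (\<Prod>k. 1 - \<beta> * q ^ k) / (1 - \<beta>)"
    using prodinf_split_head[OF convergent_prod_qpoch[OF assms(1,2)]] assms(3) by simp
  then show ?thesis using assms(3) by (simp add: qpoch_inf_def mult.assoc)
qed

definition qlattice :: "real \<Rightarrow> real \<Rightarrow> nat \<Rightarrow> real" where
  "qlattice q a j = (1/q) ^ j * a"

lemma qlattice_pos: "0 < q \<Longrightarrow> 0 < a \<Longrightarrow> 0 < qlattice q a j"
  by (simp add: qlattice_def)

lemma qlattice_Suc: "qlattice q a (Suc j) = qlattice q a j / q"
  by (simp add: qlattice_def)

lemma qlattice_ge: "0 < q \<Longrightarrow> q \<le> 1 \<Longrightarrow> 0 < a \<Longrightarrow> a \<le> qlattice q a j"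
  by (simp add: qlattice_def)

lemma inj_qlattice: "0 < q \<Longrightarrow> q < 1 \<Longrightarrow> a \<noteq> 0 \<Longrightarrow> inj (qlattice q a)"
  by (rule injI) (simp add: qlattice_def)

text \<open>The summand of the theorem, with \<open>(1/q - 1) a q^(-j)\<close> the mass of \<open>d_(q^(-1)) x\<close> at
  \<open>x_j\<close> and \<open>|x_j|^\<alpha> = a^\<alpha> c^j\<close> for \<open>c = q^(-\<alpha>)\<close>; the constant \<open>a^\<alpha>\<close> is left out.\<close>

definition qweight :: "real \<Rightarrow> real \<Rightarrow> real \<Rightarrow> nat \<Rightarrow> real" where
  "qweight q a c j = (let x = qlattice q a j in
     (1/q - 1) * a * (1/q) ^ j * c ^ j * exp ((1/2) * (log q x - 1) * ln x) * qpoch_inf (q * a / x) q)"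

lemma exp_half_log_div:
  assumes "0 < q" "q \<noteq> 1" "0 < x"
  shows "exp ((1/2) * (log q (x / q) - 1) * ln (x / q)) = exp ((1/2) * (log q x - 1) * ln x) * (q / x)"
proof -
  have "ln q \<noteq> 0" using assms by simp
  then have "(1/2) * (log q (x / q) - 1) * ln (x / q) = (1/2) * (log q x - 1) * ln x + (ln q - ln x)"
    using assms by (simp add: log_def ln_div field_simps power2_eq_square)
  then have "exp ((1/2) * (log q (x / q) - 1) * ln (x / q))
      = exp ((1/2) * (log q x - 1) * ln x) * exp (ln q - ln x)"
    by (simp only: exp_add)
  then show ?thesis using assms by (simp add: exp_diff)
qed

lemma qweight_pos:
  assumes "0 < q" "q < 1" "0 < a" "0 < c"
  shows "0 < qweight q a c j"
proof -
  have "q * a / qlattice q a j = q ^ Suc j"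
    using assms by (simp add: qlattice_def field_simps)
  moreover have "q ^ Suc j < 1" using assms by (intro power_Suc_less_one)
  ultimately have "0 < qpoch_inf (q * a / qlattice q a j) q"
    using assms by (simp add: qpoch_inf_pos)
  with assms show ?thesis by (simp add: qweight_def Let_def)
qed

lemma qweight_Suc:
  assumes "0 < q" "q < 1" "0 < a"
  shows "qweight q a c (Suc j) * (qlattice q a (Suc j) - a) = c / q * qweight q a c j"
proof -
  define x where "x = qlattice q a j"
  have x: "0 < x" using assms by (simp add: x_def qlattice_pos)
  have qa: "q * a / x = q ^ Suc j"
    using assms by (simp add: x_def qlattice_def field_simps)
  have qa': "q * a / (x / q) = q ^ Suc j * q"
    using qa assms x by (simp add: field_simps)
  have "q ^ Suc j \<noteq> 1" using power_Suc_less_one[of q j] assms by linarith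
  then have poch: "qpoch_inf (q * a / x) q = (1 - q * a / x) * qpoch_inf (q * a / (x / q)) q"
    unfolding qa qa' using assms by (intro qpoch_inf_unfold)
  define E where "E y = exp ((1/2) * (log q y - 1) * ln y)" for y
  have E: "E (x / q) = E x * (q / x)"
    unfolding E_def using assms x by (intro exp_half_log_div) auto
  have w0: "qweight q a c j = (1/q - 1) * a * (1/q) ^ j * c ^ j * E x * qpoch_inf (q * a / x) q"
    by (simp add: qweight_def Let_def x_def E_def)
  have w1: "qweight q a c (Suc j)
      = (1/q - 1) * a * (1/q) ^ Suc j * c ^ Suc j * E (x / q) * qpoch_inf (q * a / (x / q)) q"
    by (simp add: qweight_def Let_def x_def E_def qlattice_Suc del: power_Suc)
  show ?thesis
    unfolding w0 w1 qlattice_Suc x_def[symmetric] E poch using assms x by (simp add: field_simps)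
qed

lemma qweight_ratio_tendsto_0:
  assumes "0 < q" "q < 1" "0 < a" "0 < c"
  shows "(\<lambda>j. qweight q a c (Suc j) / qweight q a c j) \<longlonglongrightarrow> 0"
proof -
  have "qweight q a c (Suc j) / qweight q a c j = c * q ^ j / (a * (1 - q * q ^ j))" for j
  proof -
    define D where "D = qlattice q a (Suc j) - a"
    have "q ^ Suc j < 1" using assms by (intro power_Suc_less_one)
    then have D: "D = a * (1 - q * q ^ j) / q ^ Suc j" and "0 < D"
      using assms by (simp_all add: D_def qlattice_def field_simps)
    then have "qweight q a c (Suc j) = c / q * qweight q a c j / D"
      using qweight_Suc[OF assms(1-3), of c j, folded D_def] assms(1)
      by (simp add: eq_divide_eq mult_ac)
    then show ?thesis
      using qweight_pos[OF assms, of j] assms \<open>q ^ Suc j < 1\<close> unfolding D by (simp add: field_simps)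
  qed
  moreover have "(\<lambda>j. c * q ^ j / (a * (1 - q * q ^ j))) \<longlonglongrightarrow> c * 0 / (a * (1 - q * 0))"
    using assms by (intro tendsto_intros) auto
  ultimately show ?thesis by simp
qed

lemma summable_mult_if_ratio_tendsto_0:
  fixes w h :: "nat \<Rightarrow> real"
  assumes pos: "\<And>j. 0 < w j" and ratio: "(\<lambda>j. w (Suc j) / w j) \<longlonglongrightarrow> 0"
    and bound: "\<And>j. \<bar>h j\<bar> \<le> M * r ^ j"
  shows "summable (\<lambda>j. w j * h j)"
proof -
  define \<epsilon> where "\<epsilon> = 1 / (2 * (\<bar>r\<bar> + 1))"
  have "\<epsilon> > 0" by (simp add: \<epsilon>_def add_pos_nonneg)
  with ratio have "eventually (\<lambda>j. w (Suc j) / w j < \<epsilon>) sequentially"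
    by (rule order_tendstoD)
  then obtain N where N: "\<And>j. j \<ge> N \<Longrightarrow> w (Suc j) / w j < \<epsilon>"
    by (auto simp: eventually_sequentially)
  have "summable (\<lambda>j. w j * \<bar>r\<bar> ^ j)"
  proof (rule summable_ratio_test[where c = "1/2" and N = N])
    fix j assume "N \<le> j"
    then have "w (Suc j) \<le> \<epsilon> * w j"
      using N[of j] pos[of j] by (simp add: divide_less_eq)
    then have "w (Suc j) * \<bar>r\<bar> \<le> \<epsilon> * w j * \<bar>r\<bar>"
      by (rule mult_right_mono) simp
    also have "\<dots> = 1/2 * w j * (\<bar>r\<bar> / (\<bar>r\<bar> + 1))"
      by (simp add: \<epsilon>_def)
    also have "\<dots> \<le> 1/2 * w j"
      using pos[of j] by (intro mult_left_le) (auto simp: add_pos_nonneg)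
    finally have "w (Suc j) * \<bar>r\<bar> \<le> 1/2 * w j" .
    then have "w (Suc j) * \<bar>r\<bar> * \<bar>r\<bar> ^ j \<le> 1/2 * w j * \<bar>r\<bar> ^ j"
      by (rule mult_right_mono) simp
    then show "norm (w (Suc j) * \<bar>r\<bar> ^ Suc j) \<le> 1/2 * norm (w j * \<bar>r\<bar> ^ j)"
      using pos[of j] pos[of "Suc j"] by (simp add: abs_mult mult_ac)
  qed simp
  then have "summable (\<lambda>j. \<bar>M\<bar> * (w j * \<bar>r\<bar> ^ j))" by (rule summable_mult)
  then show ?thesis
  proof (rule summable_comparison_test')
    fix j
    have "\<bar>h j\<bar> \<le> \<bar>M\<bar> * \<bar>r\<bar> ^ j"
      using bound[of j] abs_ge_self[of "M * r ^ j"] by (simp add: abs_mult power_abs)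
    then show "norm (w j * h j) \<le> \<bar>M\<bar> * (w j * \<bar>r\<bar> ^ j)"
      using pos[of j] by (simp add: abs_mult mult_left_mono mult.left_commute)
  qed
qed

lemma abs_poly_le:
  fixes p :: "real poly"
  shows "\<bar>poly p x\<bar> \<le> (\<Sum>i\<le>degree p. \<bar>coeff p i\<bar>) * max 1 \<bar>x\<bar> ^ degree p"
proof -
  have "\<bar>poly p x\<bar> \<le> (\<Sum>i\<le>degree p. \<bar>coeff p i\<bar> * \<bar>x\<bar> ^ i)"
    unfolding poly_altdef by (rule order_trans[OF sum_abs]) (simp add: abs_mult power_abs)
  also have "\<dots> \<le> (\<Sum>i\<le>degree p. \<bar>coeff p i\<bar> * max 1 \<bar>x\<bar> ^ degree p)"
  proof (intro sum_mono mult_left_mono)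
    fix i assume "i \<in> {..degree p}"
    then have "\<bar>x\<bar> ^ i \<le> max 1 \<bar>x\<bar> ^ i" by (intro power_mono) auto
    also have "\<dots> \<le> max 1 \<bar>x\<bar> ^ degree p" using \<open>i \<in> {..degree p}\<close> by (intro power_increasing) auto
    finally show "\<bar>x\<bar> ^ i \<le> max 1 \<bar>x\<bar> ^ degree p" .
  qed simp
  finally show ?thesis by (simp add: sum_distrib_right)
qed

lemma abs_poly_qlattice_le:
  fixes p :: "real poly"
  assumes "0 < q" "q \<le> 1" "0 < a"
  obtains M where "0 \<le> M" "\<And>j. \<bar>poly p (qlattice q a j)\<bar> \<le> M * ((1/q) ^ degree p) ^ j"
proof
  define S where "S = (\<Sum>i\<le>degree p. \<bar>coeff p i\<bar>)"
  have "0 \<le> S" by (simp add: S_def sum_nonneg)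
  then show "0 \<le> S * max 1 a ^ degree p" by simp
  fix j
  have "1 \<le> (1/q) ^ j" using assms by simp
  then have "max 1 \<bar>qlattice q a j\<bar> \<le> max 1 a * (1/q) ^ j"
    using assms mult_mono[of 1 "max 1 a" 1 "(1/q) ^ j"]
    by (auto simp: qlattice_def mult.commute intro!: mult_right_mono)
  then have "max 1 \<bar>qlattice q a j\<bar> ^ degree p \<le> (max 1 a * (1/q) ^ j) ^ degree p"
    by (intro power_mono) auto
  also have "\<dots> = max 1 a ^ degree p * ((1/q) ^ degree p) ^ j"
    by (simp add: power_mult_distrib power_mult[symmetric] mult.commute)
  finally have "S * max 1 \<bar>qlattice q a j\<bar> ^ degree p \<le> S * (max 1 a ^ degree p * ((1/q) ^ degree p) ^ j)"
    using \<open>0 \<le> S\<close> by (rule mult_left_mono)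
  with abs_poly_le[of p "qlattice q a j"]
  show "\<bar>poly p (qlattice q a j)\<bar> \<le> S * max 1 a ^ degree p * ((1/q) ^ degree p) ^ j"
    unfolding S_def[symmetric] by (simp add: mult.assoc)
qed

lemma summable_qweight_poly:
  fixes p :: "real poly"
  assumes "0 < q" "q < 1" "0 < a" "0 < c" "\<And>j. \<bar>b j\<bar> \<le> K"
  shows "summable (\<lambda>j. qweight q a c j * (b j * poly p (qlattice q a j)))"
proof -
  obtain M where "0 \<le> M" and M: "\<And>j. \<bar>poly p (qlattice q a j)\<bar> \<le> M * ((1/q) ^ degree p) ^ j"
    using abs_poly_qlattice_le assms(1-3) by (metis less_imp_le)
  have "\<bar>b j * poly p (qlattice q a j)\<bar> \<le> (K * M) * ((1/q) ^ degree p) ^ j" for j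
    unfolding abs_mult mult.assoc using assms(5)[of j] M[of j] \<open>0 \<le> M\<close>
    by (intro mult_mono) auto
  with qweight_pos[OF assms(1-4)] qweight_ratio_tendsto_0[OF assms(1-4)] show ?thesis
    by (rule summable_mult_if_ratio_tendsto_0)
qed

section \<open>Orthogonality of the polynomial solutions\<close>

lemma qEHT_difference_form:
  assumes "0 < q" "q \<noteq> 1" "x \<noteq> 0"
  shows "s1 * x * qD (1/q) (qD q y) x + (t0 + t1 * x) * qD q y x
       = q\<^sup>2 * s1 / ((1 - q)\<^sup>2 * x) * (y (x / q) - y x)
         + (q * s1 + (q - 1) * (t0 + t1 * x)) / ((1 - q)\<^sup>2 * x) * (y (q * x) - y x)"
proof -
  have q: "q \<noteq> 0" "1 - q \<noteq> 0" using assms by auto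
  have D1: "qD q y x = (y x - y (q * x)) / ((1 - q) * x)"
    using assms by (simp add: qD_def)
  have D2: "qD q y (x / q) = q * (y (x / q) - y x) / ((1 - q) * x)"
    using assms q by (simp add: qD_def field_simps)
  have D3: "qD (1/q) (qD q y) x = q * (qD q y (x / q) - qD q y x) / ((1 - q) * x)"
    unfolding qD_def[of "1/q" "qD q y" x] using assms q by (simp add: field_simps)
  have "s1 * x * (q * (q * (Yp - Y0) / (d * x) - (Y0 - Ym) / (d * x)) / (d * x))
      + (t0 + t1 * x) * ((Y0 - Ym) / (d * x))
      = q\<^sup>2 * s1 / (d\<^sup>2 * x) * (Yp - Y0) + (q * s1 - d * (t0 + t1 * x)) / (d\<^sup>2 * x) * (Ym - Y0)"
    if "d \<noteq> 0" for d Yp Y0 Ym :: real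
    using that assms by (simp add: field_simps power2_eq_square)
  from this[OF q(2), of "y (x / q)" "y x" "y (q * x)"] show ?thesis
    unfolding D3 D2 D1 by (simp add: algebra_simps)
qed

lemma qEHT_lattice_recurrence:
  assumes "0 < q" "q < 1" "0 < a"
    and R: "q * s1 + (q - 1) * t0 = (1 - q) * t1 * a"
    and y: "solves_qEHT q [:0, s1:] [:t0, t1:] n y"
  defines "x \<equiv> qlattice q a"
  shows "q\<^sup>2 * s1 / ((1 - q)\<^sup>2 * x j) * (y (x (Suc j)) - y (x j))
       + (q - 1) * t1 * (x j - a) / ((1 - q)\<^sup>2 * x j) * (y (x (j - 1)) - y (x j))
       - t1 * qnum q (int n) * y (x j) = 0"
proof -
  have "q \<noteq> 1" "x j \<noteq> 0" using qlattice_pos[of q a j] assms by (simp_all add: x_def)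
  have C: "q * s1 + (q - 1) * (t0 + t1 * x j) = (q - 1) * t1 * (x j - a)"
    using R by (simp add: algebra_simps)
  \<comment> \<open>At \<open>j = 0\<close> the backward coefficient vanishes, so the value at \<open>q a\<close> off the lattice drops out.\<close>
  have prev: "(q - 1) * t1 * (x j - a) / ((1 - q)\<^sup>2 * x j) * (y (q * x j) - y (x j))
      = (q - 1) * t1 * (x j - a) / ((1 - q)\<^sup>2 * x j) * (y (x (j - 1)) - y (x j))"
    using assms by (cases j) (simp_all add: x_def qlattice_def)
  have "s1 * x j * qD (1/q) (qD q y) (x j) + (t0 + t1 * x j) * qD q y (x j)
      = q\<^sup>2 * s1 / ((1 - q)\<^sup>2 * x j) * (y (x (Suc j)) - y (x j))
       + (q - 1) * t1 * (x j - a) / ((1 - q)\<^sup>2 * x j) * (y (x (j - 1)) - y (x j))"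
    unfolding qEHT_difference_form[OF assms(1) \<open>q \<noteq> 1\<close> \<open>x j \<noteq> 0\<close>] C prev
    using assms by (simp add: x_def qlattice_Suc)
  moreover from y[unfolded solves_qEHT_def qEHT_lambda_linear, rule_format, of "x j"]
  have "s1 * x j * qD (1/q) (qD q y) (x j) + (t0 + t1 * x j) * qD q y (x j)
      - t1 * qnum q (int n) * y (x j) = 0"
    by (simp add: algebra_simps)
  ultimately show ?thesis by linarith
qed

lemma qweight_pearson:
  fixes q a s1 t1 :: real
  assumes "0 < q" "q < 1" "0 < a" "t1 \<noteq> 0"
  defines "c \<equiv> q\<^sup>2 * s1 / ((q - 1) * t1)" and "x \<equiv> qlattice q a"
  shows "qweight q a c (Suc j) * ((q - 1) * t1 * (x (Suc j) - a) / ((1 - q)\<^sup>2 * x (Suc j)))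
       = qweight q a c j * (q\<^sup>2 * s1 / ((1 - q)\<^sup>2 * x j))"
proof -
  have "0 < x j" using assms by (simp add: x_def qlattice_pos)
  have "qweight q a c (Suc j) * ((q - 1) * t1 * (x (Suc j) - a) / ((1 - q)\<^sup>2 * x (Suc j)))
      = qweight q a c (Suc j) * (x (Suc j) - a) * (q * (q - 1) * t1 / ((1 - q)\<^sup>2 * x j))"
    using assms by (simp add: x_def qlattice_Suc)
  also have "\<dots> = c * qweight q a c j * ((q - 1) * t1 / ((1 - q)\<^sup>2 * x j))"
    unfolding x_def qweight_Suc[OF assms(1-3)] using assms by simp
  also have "\<dots> = qweight q a c j * (q\<^sup>2 * s1 / ((1 - q)\<^sup>2 * x j))"
    using assms by (simp add: c_def)
  finally show ?thesis .
qed

lemma qweight_norm_pos: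
  fixes p :: "real poly"
  assumes "0 < q" "q < 1" "0 < a" "0 < c" "p \<noteq> 0"
  shows "summable (\<lambda>j. qweight q a c j * (poly p (qlattice q a j) * poly p (qlattice q a j)))"
    and "0 < (\<Sum>j. qweight q a c j * (poly p (qlattice q a j) * poly p (qlattice q a j)))"
proof -
  show sm: "summable (\<lambda>j. qweight q a c j * (poly p (qlattice q a j) * poly p (qlattice q a j)))"
    using summable_qweight_poly[OF assms(1-4), of "\<lambda>_. 1" 1 "p * p"] by simp
  have "\<not> range (qlattice q a) \<subseteq> {x. poly p x = 0}"
  proof
    assume "range (qlattice q a) \<subseteq> {x. poly p x = 0}"
    then have "finite (range (qlattice q a))"
      using poly_roots_finite[OF assms(5)] by (rule finite_subset)
    with inj_qlattice[OF assms(1,2)] assms(3) show False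
      by (simp add: finite_image_iff)
  qed
  then obtain i where i: "poly p (qlattice q a i) \<noteq> 0" by auto
  show "0 < (\<Sum>j. qweight q a c j * (poly p (qlattice q a j) * poly p (qlattice q a j)))"
  proof (rule suminf_pos2[OF sm])
    show "0 \<le> qweight q a c j * (poly p (qlattice q a j) * poly p (qlattice q a j))" for j
      by (intro mult_nonneg_nonneg less_imp_le[OF qweight_pos[OF assms(1-4)]] zero_le_square)
    show "0 < qweight q a c i * (poly p (qlattice q a i) * poly p (qlattice q a i))"
      by (rule mult_pos_pos[OF qweight_pos[OF assms(1-4)]]) (use i not_real_square_gt_zero in blast)
  qed
qed

lemma qEHT_lattice_orthogonal:
  fixes q a s1 t0 t1 :: real
  assumes q: "0 < q" "q < 1" and a: "0 < a" and c: "0 < q\<^sup>2 * s1 / ((q - 1) * t1)"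
    and R: "q * s1 + (q - 1) * t0 = (1 - q) * t1 * a"
    and f: "solves_qEHT q [:0, s1:] [:t0, t1:] n (poly f)"
    and g: "solves_qEHT q [:0, s1:] [:t0, t1:] m (poly g)"
    and "n \<noteq> m"
  defines "w \<equiv> qweight q a (q\<^sup>2 * s1 / ((q - 1) * t1))" and "x \<equiv> qlattice q a"
  shows "(\<lambda>j. w j * (poly f (x j) * poly g (x j))) sums 0"
proof -
  have "t1 \<noteq> 0" using c by auto
  define A where "A j = q\<^sup>2 * s1 / ((1 - q)\<^sup>2 * x j)" for j
  define C where "C j = (q - 1) * t1 * (x j - a) / ((1 - q)\<^sup>2 * x j)" for j
  have rec: "A j * (poly p (x (Suc j)) - poly p (x j)) + C j * (poly p (x (j - 1)) - poly p (x j))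
      + (- t1 * qnum q (int k)) * poly p (x j) = 0"
    if "solves_qEHT q [:0, s1:] [:t0, t1:] k (poly p)" for p k j
    using qEHT_lattice_recurrence[OF q a R that, of j] by (simp add: A_def C_def x_def)
  \<comment> \<open>As \<open>x (Suc j) = x j / q\<close>, the flux is a bounded factor times a polynomial in \<open>x j\<close>.\<close>
  have "summable (\<lambda>j. w j * (A j * poly (pcompose f [:0, 1/q:] * g - f * pcompose g [:0, 1/q:]) (x j)))"
    unfolding w_def x_def
  proof (rule summable_qweight_poly[OF q a c])
    fix j
    show "\<bar>A j\<bar> \<le> \<bar>q\<^sup>2 * s1\<bar> / ((1 - q)\<^sup>2 * a)"
      using qlattice_ge[of q a j] qlattice_pos[of q a j] q a
      by (simp add: A_def x_def abs_mult frac_le)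
  qed
  then have flux: "(\<lambda>j. w j * A j * (poly f (x (Suc j)) * poly g (x j) - poly f (x j) * poly g (x (Suc j))))
      \<longlonglongrightarrow> 0"
    using q by (simp add: poly_pcompose x_def qlattice_Suc algebra_simps summable_LIMSEQ_zero)
  have pearson: "w (Suc j) * C (Suc j) = w j * A j" for j
    using qweight_pearson[OF q a \<open>t1 \<noteq> 0\<close>, of s1 j] by (simp add: w_def A_def C_def x_def)
  have "- t1 * qnum q (int n) \<noteq> - t1 * qnum q (int m)"
    using \<open>t1 \<noteq> 0\<close> \<open>n \<noteq> m\<close> q by (simp add: qnum_of_nat power_inject_exp')
  with pearson rec[OF f] rec[OF g] flux show ?thesis
    by (rule discrete_orthogonality)
qed

lemma qEHT_orthogonal_polynomials:
  fixes q a s1 t0 t1 :: real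
  assumes q: "0 < q" "q < 1" and a: "0 < a" and c: "0 < q\<^sup>2 * s1 / ((q - 1) * t1)"
    and R: "q * s1 + (q - 1) * t0 = (1 - q) * t1 * a"
  defines "w \<equiv> qweight q a (q\<^sup>2 * s1 / ((q - 1) * t1))" and "x \<equiv> qlattice q a"
  obtains P :: "nat \<Rightarrow> real poly" and N :: "nat \<Rightarrow> real"
  where "\<And>n. degree (P n) = n" and "\<And>n. solves_qEHT q [:0, s1:] [:t0, t1:] n (poly (P n))"
    and "\<And>n. 0 < N n"
    and "\<And>n m. (\<lambda>j. w j * (poly (P n) (x j) * poly (P m) (x j))) sums (if m = n then N n else 0)"
proof -
  have "t1 \<noteq> 0" using c by auto
  then have "\<forall>n. \<exists>p. degree p = n \<and> lead_coeff p = 1 \<and> solves_qEHT q [:0, s1:] [:t0, t1:] n (poly p)"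
    using q qEHT_polynomial_solution by auto
  then obtain P where P: "\<And>n. degree (P n) = n"
      "\<And>n. solves_qEHT q [:0, s1:] [:t0, t1:] n (poly (P n))" and monic: "\<And>n. lead_coeff (P n) = 1"
    by metis
  define N where "N n = (\<Sum>j. w j * (poly (P n) (x j) * poly (P n) (x j)))" for n
  have "P n \<noteq> 0" for n
    using monic[of n] by auto
  note norm = qweight_norm_pos[OF q a c this, folded w_def x_def N_def]
  show ?thesis
  proof (rule that[OF P])
    show "0 < N n" for n unfolding N_def by (rule norm(2))
    show "(\<lambda>j. w j * (poly (P n) (x j) * poly (P m) (x j))) sums (if m = n then N n else 0)" for n m
      using qEHT_lattice_orthogonal[OF q a c R P(2)[of n] P(2)[of m]] summable_sums[OF norm(1)]
      by (auto simp: w_def x_def N_def)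
  qed
qed

lemma qweight_parameter_pos:
  fixes q s1 t1 :: real
  assumes "0 < q" "q < 1" "t1 / s1 < 0"
  shows "0 < q\<^sup>2 * s1 / ((q - 1) * t1)"
proof -
  have "0 < (q - 1) * (t1 * s1)"
    using assms by (intro mult_neg_neg) (auto simp: divide_less_0_iff mult_less_0_iff)
  then have "0 < q\<^sup>2 * ((q - 1) * (t1 * s1))"
    using assms(1) by simp
  then have "0 < (q\<^sup>2 * s1) * ((q - 1) * t1)"
    by (simp only: mult_ac)
  then show ?thesis by (metis divide_pos_pos divide_neg_neg zero_less_mult_iff)
qed

lemma linear_poly_eq:
  assumes "degree p \<le> 1"
  shows "p = [:coeff p 0, coeff p 1:]"
proof (rule poly_eqI)
  fix k show "coeff p k = coeff [:coeff p 0, coeff p 1:] k"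
    using assms by (cases k) (auto simp: coeff_pCons coeff_eq_0 split: nat.split)
qed

lemma sigma2_factorization_root:
  fixes q s1 a :: real
  assumes "0 < q"
    and "smult q ([:0, s1:] + smult (1 - 1/q) ([:0, 1:] * \<tau>))
       = smult (q * (1 - 1/q) * coeff \<tau> 1) ([:0, 1:] * [:- a, 1:])"
  shows "q * s1 + (q - 1) * coeff \<tau> 0 = (1 - q) * coeff \<tau> 1 * a"
proof -
  have "coeff (smult q ([:0, s1:] + smult (1 - 1/q) ([:0, 1:] * \<tau>))) 1
      = coeff (smult (q * (1 - 1/q) * coeff \<tau> 1) ([:0, 1:] * [:- a, 1:])) 1"
    using assms(2) by simp
  with assms(1) have "q * (q * s1 + (q - 1) * coeff \<tau> 0) = q * ((1 - q) * coeff \<tau> 1 * a)"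
    by (simp add: field_simps)
  with assms(1) show ?thesis by simp
qed

lemma exp_alpha_ln_qlattice:
  fixes \<alpha> :: complex
  assumes "0 < q" "0 < a" "exp (\<alpha> * of_real (ln q)) = of_real (1 / c)"
  shows "exp (\<alpha> * of_real (ln \<bar>qlattice q a j\<bar>)) = exp (\<alpha> * of_real (ln a)) * of_real (c ^ j)"
proof -
  have "c \<noteq> 0" using assms(3) by (metis div_by_0 exp_not_eq_zero of_real_0)
  have "ln \<bar>qlattice q a j\<bar> = ln a - real j * ln q"
    using assms by (simp add: qlattice_def ln_mult ln_realpow ln_div)
  then have ln_eq: "complex_of_real (ln \<bar>qlattice q a j\<bar>) = of_real (ln a) - of_nat j * of_real (ln q)"
    by simp
  have "\<alpha> * of_real (ln \<bar>qlattice q a j\<bar>) = \<alpha> * of_real (ln a) - of_nat j * (\<alpha> * of_real (ln q))"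
    unfolding ln_eq by (simp add: algebra_simps)
  then have "exp (\<alpha> * of_real (ln \<bar>qlattice q a j\<bar>))
      = exp (\<alpha> * of_real (ln a)) / exp (\<alpha> * of_real (ln q)) ^ j"
    by (simp add: exp_diff exp_of_nat_mult)
  with \<open>c \<noteq> 0\<close> show ?thesis unfolding assms(3) by (simp add: field_simps)
qed

lemma qweight_summand:
  fixes \<alpha> :: complex and u v :: real
  assumes "0 < q" "0 < a" "exp (\<alpha> * of_real (ln q)) = of_real (1 / c)"
  shows "complex_of_real ((1/q - 1) * a * (1/q) ^ j * u * v)
           * (let x = (1/q) ^ j * a in
                exp (\<alpha> * complex_of_real (ln \<bar>x\<bar>))
                * complex_of_real (exp ((1/2) * (log q x - 1) * ln x))
                * complex_of_real (qpoch_inf (q * a / x) q))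
         = exp (\<alpha> * of_real (ln a)) * of_real (qweight q a c j * (u * v))"
  unfolding qlattice_def[symmetric] Let_def exp_alpha_ln_qlattice[OF assms]
  by (simp add: qweight_def Let_def mult_ac)

theorem theorem5p15:
  fixes q :: real and \<sigma>1 \<tau> :: "real poly" and s1 a :: real and \<alpha> :: complex
  assumes q: "0 < q" "q < 1"
    and sigma1: "\<sigma>1 = [:0, s1:]" "s1 \<noteq> 0"
    and tau: "degree \<tau> \<le> 1" "coeff \<tau> 1 \<noteq> 0"
    and sigma2_fact: "smult q (\<sigma>1 + smult (1 - 1/q) ([:0, 1:] * \<tau>))
                 = smult (q * (1 - 1/q) * coeff \<tau> 1) ([:0, 1:] * [:- a, 1:])"
    and sigma2': "q * (s1 + (1 - 1/q) * coeff \<tau> 0) \<noteq> 0"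
    and Lambda: "coeff \<tau> 1 / s1 < 0"
    and a_pos: "a > 0"
    and y0: "q * ((1/q) * (1 + (1 - 1/q) * coeff \<tau> 0 / s1)) < 0"
    and alpha: "exp (\<alpha> * complex_of_real (ln q))
                 = complex_of_real (q powi (-2) * (q * (1 - 1/q) * coeff \<tau> 1) / s1)"
  shows "\<exists>P :: nat \<Rightarrow> real poly. \<exists>d :: nat \<Rightarrow> complex.
     \<forall>n. degree (P n) = n \<and> solves_qEHT q \<sigma>1 \<tau> n (poly (P n)) \<and> d n \<noteq> 0 \<and>
       (\<forall>m. (\<lambda>j. complex_of_real ((1/q - 1) * a * (1/q) ^ j
                  * poly (P n) ((1/q) ^ j * a) * poly (P m) ((1/q) ^ j * a))
               * (let x = (1/q) ^ j * a in
                    exp (\<alpha> * complex_of_real (ln \<bar>x\<bar>))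
                    * complex_of_real (exp ((1/2) * (log q x - 1) * ln x))
                    * complex_of_real (qpoch_inf (q * a / x) q)))
            sums (if m = n then d n else 0))"
proof -
  \<comment> \<open>\<open>sigma2'\<close> and \<open>y0\<close> are consequences of \<open>sigma2_fact\<close>, \<open>Lambda\<close> and \<open>a_pos\<close>.\<close>
  define t0 t1 where "t0 = coeff \<tau> 0" and "t1 = coeff \<tau> 1"
  define c where "c = q\<^sup>2 * s1 / ((q - 1) * t1)"
  have tau_eq: "\<tau> = [:t0, t1:]" using linear_poly_eq[OF tau(1)] by (simp add: t0_def t1_def)
  have R: "q * s1 + (q - 1) * t0 = (1 - q) * t1 * a"
    using sigma2_factorization_root[OF q(1) sigma2_fact[unfolded sigma1]] by (simp add: t0_def t1_def)
  have c_pos: "0 < c" unfolding c_def t1_def using q Lambda by (rule qweight_parameter_pos)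
  have "q powi (-2) * (q * (1 - 1/q) * coeff \<tau> 1) / s1 = 1 / c"
    using q sigma1(2) tau(2) by (simp add: c_def t1_def power_int_minus field_simps power2_eq_square)
  with alpha have alpha_c: "exp (\<alpha> * of_real (ln q)) = of_real (1 / c)" by (simp only:)
  obtain P N where deg: "\<And>n. degree (P n) = n"
    and solves: "\<And>n. solves_qEHT q [:0, s1:] [:t0, t1:] n (poly (P n))" and N: "\<And>n. 0 < N n"
    and ortho: "\<And>n m. (\<lambda>j. qweight q a c j * (poly (P n) (qlattice q a j) * poly (P m) (qlattice q a j)))
          sums (if m = n then N n else 0)"
    using qEHT_orthogonal_polynomials[OF q a_pos c_pos[unfolded c_def] R, folded c_def] by blast
  define K where "K = exp (\<alpha> * of_real (ln a))"
  have "(\<lambda>j. K * of_real (qweight q a c j * (poly (P n) ((1/q) ^ j * a) * poly (P m) ((1/q) ^ j * a))))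
      sums (if m = n then K * of_real (N n) else 0)" for n m
    using sums_mult[OF sums_of_real[OF ortho[of n m]], of K] unfolding qlattice_def
    by (cases "m = n") simp_all
  moreover have "K * of_real (N n) \<noteq> 0" for n using N[of n] by (simp add: K_def)
  ultimately show ?thesis
    unfolding qweight_summand[OF q(1) a_pos alpha_c, folded K_def] sigma1 tau_eq
    using deg solves by (intro exI[of _ P] exI[of _ "\<lambda>n. K * of_real (N n)"]) blast
qed

end
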